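(* Let $G$ be a finite simple graph with a clique vertex-partition $\Pi=\{W_1,\dots,W_p\}$, and let $t\ge 2$ be an integer. Then (1) $\dim \mathrm{CF}_t(G(\Pi,t)) = p(t-1)-1$, and (2) $\mathrm{CF}_t(G(\Pi,t))$ is pure.
   Context: A clique vertex-partition of $G$ is a collection $\Pi=\{W_1,\dots,W_p\}$ of pairwise disjoint (possibly empty) vertex sets each inducing a clique in $G$, whose union is $V(G)$. The $t$-clique whiskering $G(\Pi,t)$ is obtained from $G$ by adding, for each $1\le i\le p$, $t-1$ new distinct vertices $x_{i,1},\dots,x_{i,t-1}$ (all new vertices distinct from each other and from $V(G)$) and adding edges so that $W_i\cup\{x_{i,1},\dots,x_{i,t-1}\}$ becomes a clique; no other edges are added. $\mathrm{CF}_t(\cdot)$ is the simplicial complex on the vertex set whose faces are the vertex subsets inducing no clique on $t$ vertices. The dimension of a complex is the maximum of $|F|-1$ over faces $F$; a complex is pure if all facets have the same dimension. *)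

theory Defs
  imports Main
begin

definition simple_graph :: "'a set \<Rightarrow> ('a \<Rightarrow> 'a \<Rightarrow> bool) \<Rightarrow> bool" where
  "simple_graph V E \<longleftrightarrow> finite V \<and> (\<forall>x y. E x y \<longrightarrow> x \<in> V \<and> y \<in> V)
     \<and> (\<forall>x y. E x y \<longrightarrow> E y x) \<and> (\<forall>x. \<not> E x x)"

definition is_clique :: "'a set \<Rightarrow> ('a \<Rightarrow> 'a \<Rightarrow> bool) \<Rightarrow> 'a set \<Rightarrow> bool" where
  "is_clique V E S \<longleftrightarrow> S \<subseteq> V \<and> (\<forall>x\<in>S. \<forall>y\<in>S. x \<noteq> y \<longrightarrow> E x y)"

text \<open>A clique vertex-partition W_0, ..., W_(p-1) (possibly empty blocks).\<close>

definition clique_vertex_partition ::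
  "'a set \<Rightarrow> ('a \<Rightarrow> 'a \<Rightarrow> bool) \<Rightarrow> nat \<Rightarrow> (nat \<Rightarrow> 'a set) \<Rightarrow> bool" where
  "clique_vertex_partition V E p W \<longleftrightarrow>
     (\<forall>i<p. is_clique V E (W i)) \<and>
     (\<forall>i<p. \<forall>j<p. i \<noteq> j \<longrightarrow> W i \<inter> W j = {}) \<and>
     (\<Union>i<p. W i) = V"

text \<open>t-clique whiskering: old vertices are Inl v, new vertex x_{i,j} is Inr (i,j)
with i < p and j < t - 1.\<close>

definition whisker_vertices :: "'a set \<Rightarrow> nat \<Rightarrow> nat \<Rightarrow> ('a + nat \<times> nat) set" where
  "whisker_vertices V p t = Inl ` V \<union> Inr ` {(i, j). i < p \<and> j < t - 1}"

fun whisker_edges ::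
  "('a \<Rightarrow> 'a \<Rightarrow> bool) \<Rightarrow> nat \<Rightarrow> (nat \<Rightarrow> 'a set) \<Rightarrow> nat \<Rightarrow>
   ('a + nat \<times> nat) \<Rightarrow> ('a + nat \<times> nat) \<Rightarrow> bool" where
  "whisker_edges E p W t (Inl u) (Inl v) = E u v"
| "whisker_edges E p W t (Inl u) (Inr (i, j)) = (i < p \<and> j < t - 1 \<and> u \<in> W i)"
| "whisker_edges E p W t (Inr (i, j)) (Inl u) = (i < p \<and> j < t - 1 \<and> u \<in> W i)"
| "whisker_edges E p W t (Inr (i, j)) (Inr (i', j')) =
     (i < p \<and> j < t - 1 \<and> i' = i \<and> j' < t - 1 \<and> j \<noteq> j')"

definition clique_free_complex :: "'b set \<Rightarrow> ('b \<Rightarrow> 'b \<Rightarrow> bool) \<Rightarrow> nat \<Rightarrow> 'b set set" where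
  "clique_free_complex V E t =
     {F. F \<subseteq> V \<and> \<not> (\<exists>S. S \<subseteq> F \<and> card S = t \<and> is_clique V E S)}"

definition complex_dim :: "'b set set \<Rightarrow> int" where
  "complex_dim K = Max ((\<lambda>F. int (card F) - 1) ` K)"

definition facets :: "'b set set \<Rightarrow> 'b set set" where
  "facets K = {F \<in> K. \<forall>G\<in>K. F \<subseteq> G \<longrightarrow> G = F}"

definition pure_complex :: "'b set set \<Rightarrow> bool" where
  "pure_complex K \<longleftrightarrow> (\<forall>F\<in>facets K. \<forall>G\<in>facets K. int (card F) - 1 = int (card G) - 1)"

end

theory Submission
  imports Defs
begin

text \<open>The blocks \<open>B\<^sub>i = W\<^sub>i \<union> {x\<^sub>i\<^sub>,\<^sub>1, \<dots>, x\<^sub>i\<^sub>,\<^sub>t\<^sub>-\<^sub>1}\<close> are pairwise disjoint cliques covering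
  \<open>G(\<Pi>, t)\<close>, so a face of \<open>CF\<^sub>t\<close> meets each block in at most \<open>t - 1\<close> vertices. If a face
  meets \<open>B\<^sub>i\<close> in fewer vertices, it misses some whisker \<open>x\<^sub>i\<^sub>,\<^sub>j\<close>; since the closed
  neighbourhood of \<open>x\<^sub>i\<^sub>,\<^sub>j\<close> is \<open>B\<^sub>i\<close>, adding it creates no \<open>t\<close>-clique. Hence every facet meets
  every block in exactly \<open>t - 1\<close> vertices and has \<open>p(t - 1)\<close> elements, which gives purity,
  and the dimension because a face of maximum size is a facet.\<close>

lemma is_clique_subset: "is_clique V E C \<Longrightarrow> S \<subseteq> C \<Longrightarrow> is_clique V E S"
  by (auto simp: is_clique_def)

lemma empty_in_clique_free_complex: "t > 0 \<Longrightarrow> {} \<in> clique_free_complex V E t"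
  by (auto simp: clique_free_complex_def)

lemma finite_clique_free_complex: "finite V \<Longrightarrow> finite (clique_free_complex V E t)"
  by (rule finite_subset[of _ "Pow V"]) (auto simp: clique_free_complex_def)

lemma card_inter_clique_le:
  assumes "F \<in> clique_free_complex V E t" and "is_clique V E C"
  shows "card (F \<inter> C) \<le> t - 1"
proof (rule ccontr)
  assume "\<not> card (F \<inter> C) \<le> t - 1"
  then have "t \<le> card (F \<inter> C)" by simp
  then obtain S where "S \<subseteq> F \<inter> C" "card S = t"
    by (meson obtain_subset_with_card_n)
  with assms show False
    by (auto simp: clique_free_complex_def dest: is_clique_subset)
qed

text \<open>Every clique through \<open>x\<close> lies inside \<open>C\<close>, so a \<open>t\<close>-clique in \<open>insert x F\<close> would
  put \<open>t - 1\<close> vertices of \<open>F\<close> into \<open>C\<close>.\<close>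

lemma insert_in_clique_free_complex:
  assumes F: "F \<in> clique_free_complex V E t"
    and x: "x \<in> V" "x \<in> C" and nbhd: "\<And>y. E x y \<Longrightarrow> y \<in> C"
    and "finite C" and small: "card (F \<inter> C) < t - 1"
  shows "insert x F \<in> clique_free_complex V E t"
proof -
  have "False" if S: "S \<subseteq> insert x F" "card S = t" "is_clique V E S" for S
  proof (cases "x \<in> S")
    case False
    with S F show False by (auto simp: clique_free_complex_def)
  next
    case True
    with S nbhd have "S - {x} \<subseteq> F \<inter> C" by (fastforce simp: is_clique_def)
    with \<open>finite C\<close> have "card (S - {x}) \<le> card (F \<inter> C)" by (intro card_mono) auto
    moreover have "card (S - {x}) = t - 1"
      using True S(2) small by (simp add: card.infinite)
    ultimately show False using small by simp
  qed
  with F x(1) show ?thesis unfolding clique_free_complex_def by blast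
qed

lemma max_card_in_facets:
  assumes "F \<in> K" and "\<And>G. G \<in> K \<Longrightarrow> finite G" and "\<And>G. G \<in> K \<Longrightarrow> card G \<le> card F"
  shows "F \<in> facets K"
  unfolding facets_def using assms card_seteq by blast

lemma complex_dim_eq_facet_card:
  assumes "finite K" "K \<noteq> {}" and fin: "\<And>G. G \<in> K \<Longrightarrow> finite G"
    and facet_card: "\<And>F. F \<in> facets K \<Longrightarrow> card F = n"
  shows "complex_dim K = int n - 1"
proof -
  have "Max (card ` K) \<in> card ` K" using assms(1,2) by simp
  then obtain F where "F \<in> K" and "card F = Max (card ` K)" by auto
  have F_max: "card G \<le> card F" if "G \<in> K" for G
    using \<open>card F = Max (card ` K)\<close> that \<open>finite K\<close> by simp
  then have "card F = n"
    using facet_card max_card_in_facets[OF \<open>F \<in> K\<close> fin] by blast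
  show ?thesis
    unfolding complex_dim_def
  proof (rule Max_eqI)
    show "finite ((\<lambda>F. int (card F) - 1) ` K)" using \<open>finite K\<close> by simp
    show "int n - 1 \<in> (\<lambda>F. int (card F) - 1) ` K"
      using \<open>F \<in> K\<close> \<open>card F = n\<close> by force
  next
    fix y assume "y \<in> (\<lambda>F. int (card F) - 1) ` K"
    then obtain G where "G \<in> K" "y = int (card G) - 1" by blast
    with F_max \<open>card F = n\<close> show "y \<le> int n - 1" by fastforce
  qed
qed

lemma pure_complex_if_facets_card: "(\<And>F. F \<in> facets K \<Longrightarrow> card F = n) \<Longrightarrow> pure_complex K"
  by (simp add: pure_complex_def)

definition whisker_block :: "(nat \<Rightarrow> 'a set) \<Rightarrow> nat \<Rightarrow> nat \<Rightarrow> ('a + nat \<times> nat) set" where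
  "whisker_block W t i = Inl ` W i \<union> Inr ` ({i} \<times> {..<t - 1})"

lemma card_whiskers: "card (Inr ` ({i} \<times> {..<t - 1}) :: ('a + nat \<times> nat) set) = t - 1"
  by (simp add: card_image)

lemma finite_whisker_block:
  "clique_vertex_partition V E p W \<Longrightarrow> finite V \<Longrightarrow> i < p \<Longrightarrow> finite (whisker_block W t i)"
  by (auto simp: whisker_block_def clique_vertex_partition_def intro: finite_subset)

lemma whisker_block_disjoint:
  "clique_vertex_partition V E p W \<Longrightarrow> i < p \<Longrightarrow> j < p \<Longrightarrow> i \<noteq> j \<Longrightarrow>
     whisker_block W t i \<inter> whisker_block W t j = {}"
  by (auto simp: whisker_block_def clique_vertex_partition_def)

lemma whisker_vertices_eq_UN_whisker_block:
  "clique_vertex_partition V E p W \<Longrightarrow> whisker_vertices V p t = (\<Union>i<p. whisker_block W t i)"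
  by (fastforce simp: whisker_vertices_def whisker_block_def clique_vertex_partition_def is_clique_def)

lemma is_clique_whisker_block:
  assumes "clique_vertex_partition V E p W" "i < p"
  shows "is_clique (whisker_vertices V p t) (whisker_edges E p W t) (whisker_block W t i)"
proof -
  have "is_clique V E (W i)" using assms by (simp add: clique_vertex_partition_def)
  show ?thesis
    unfolding is_clique_def
  proof (intro conjI ballI impI)
    show "whisker_block W t i \<subseteq> whisker_vertices V p t"
      using assms whisker_vertices_eq_UN_whisker_block[OF assms(1)] by auto
    fix x y assume "x \<in> whisker_block W t i" "y \<in> whisker_block W t i" "x \<noteq> y"
    with \<open>is_clique V E (W i)\<close> \<open>i < p\<close> show "whisker_edges E p W t x y"
      by (fastforce simp: whisker_block_def is_clique_def)
  qed
qed

lemma whisker_edges_whisker_in_block: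
  "whisker_edges E p W t (Inr (i, j)) y \<Longrightarrow> y \<in> whisker_block W t i"
  by (cases y) (auto simp: whisker_block_def)

lemma card_whisker_facet_inter_block:
  assumes partition: "clique_vertex_partition V E p W" and "finite V" "i < p"
    and facet: "F \<in> facets (clique_free_complex (whisker_vertices V p t) (whisker_edges E p W t) t)"
  shows "card (F \<inter> whisker_block W t i) = t - 1"
proof (rule antisym)
  let ?K = "clique_free_complex (whisker_vertices V p t) (whisker_edges E p W t) t"
  have F: "F \<in> ?K" and F_max: "\<And>G. G \<in> ?K \<Longrightarrow> F \<subseteq> G \<Longrightarrow> G = F"
    using facet by (auto simp: facets_def)
  have block_clique: "is_clique (whisker_vertices V p t) (whisker_edges E p W t) (whisker_block W t i)"
    using partition \<open>i < p\<close> by (rule is_clique_whisker_block)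
  with F show "card (F \<inter> whisker_block W t i) \<le> t - 1"
    by (rule card_inter_clique_le)
  have fin_block: "finite (whisker_block W t i)"
    using partition \<open>finite V\<close> \<open>i < p\<close> by (rule finite_whisker_block)
  show "t - 1 \<le> card (F \<inter> whisker_block W t i)"
  proof (rule ccontr)
    assume small: "\<not> t - 1 \<le> card (F \<inter> whisker_block W t i)"
    have "\<exists>j < t - 1. Inr (i, j) \<notin> F"
    proof (rule ccontr)
      assume "\<not> (\<exists>j < t - 1. Inr (i, j) \<notin> F)"
      then have "Inr ` ({i} \<times> {..<t - 1}) \<subseteq> F \<inter> whisker_block W t i"
        by (auto simp: whisker_block_def)
      with fin_block have "t - 1 \<le> card (F \<inter> whisker_block W t i)"
        using card_mono[of "F \<inter> whisker_block W t i"] card_whiskers by (metis finite_Int)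
      with small show False ..
    qed
    then obtain j where j: "j < t - 1" "Inr (i, j) \<notin> F" by blast
    have "insert (Inr (i, j)) F \<in> ?K"
    proof (rule insert_in_clique_free_complex[OF F])
      show "Inr (i, j) \<in> whisker_vertices V p t"
        using j \<open>i < p\<close> by (simp add: whisker_vertices_def)
      show "Inr (i, j) \<in> whisker_block W t i"
        using j by (simp add: whisker_block_def)
    qed (use fin_block small whisker_edges_whisker_in_block in auto)
    with F_max j show False by blast
  qed
qed

lemma card_whisker_facet:
  assumes partition: "clique_vertex_partition V E p W" and "finite V"
    and facet: "F \<in> facets (clique_free_complex (whisker_vertices V p t) (whisker_edges E p W t) t)"
  shows "card F = p * (t - 1)"
proof -
  have "F \<subseteq> whisker_vertices V p t"
    using facet by (simp add: facets_def clique_free_complex_def)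
  then have "F = (\<Union>i<p. F \<inter> whisker_block W t i)"
    using whisker_vertices_eq_UN_whisker_block[OF partition] by blast
  also have "card \<dots> = (\<Sum>i<p. card (F \<inter> whisker_block W t i))"
  proof (rule card_UN_disjoint)
    show "\<forall>i\<in>{..<p}. finite (F \<inter> whisker_block W t i)"
      using finite_whisker_block[OF partition \<open>finite V\<close>] by blast
    show "\<forall>i\<in>{..<p}. \<forall>j\<in>{..<p}. i \<noteq> j \<longrightarrow>
        (F \<inter> whisker_block W t i) \<inter> (F \<inter> whisker_block W t j) = {}"
      using whisker_block_disjoint[OF partition] by blast
  qed simp
  also have "\<dots> = p * (t - 1)"
    using card_whisker_facet_inter_block[OF partition \<open>finite V\<close> _ facet] by simp
  finally show ?thesis .
qed

lemma finite_whisker_vertices: "finite V \<Longrightarrow> finite (whisker_vertices V p t)"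
  unfolding whisker_vertices_def
  by (auto intro: finite_subset[of _ "{..<p} \<times> {..<t - 1}"])

theorem theorem4p8:
  fixes V :: "'a set" and E :: "'a \<Rightarrow> 'a \<Rightarrow> bool"
    and p :: nat and W :: "nat \<Rightarrow> 'a set" and t :: nat
  assumes "simple_graph V E"
    and "clique_vertex_partition V E p W"
    and "t \<ge> 2"
  shows "complex_dim (clique_free_complex (whisker_vertices V p t) (whisker_edges E p W t) t)
           = int p * (int t - 1) - 1
         \<and> pure_complex (clique_free_complex (whisker_vertices V p t) (whisker_edges E p W t) t)"
proof -
  let ?K = "clique_free_complex (whisker_vertices V p t) (whisker_edges E p W t) t"
  have "finite V" using assms(1) by (simp add: simple_graph_def)
  then have fin_vertices: "finite (whisker_vertices V p t)" by (rule finite_whisker_vertices)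
  have facet_card: "\<And>F. F \<in> facets ?K \<Longrightarrow> card F = p * (t - 1)"
    using card_whisker_facet[OF assms(2) \<open>finite V\<close>] .
  have "complex_dim ?K = int (p * (t - 1)) - 1"
  proof (rule complex_dim_eq_facet_card[OF _ _ _ facet_card])
    show "finite ?K" using fin_vertices by (rule finite_clique_free_complex)
    have "{} \<in> ?K" using assms(3) by (simp add: empty_in_clique_free_complex)
    then show "?K \<noteq> {}" by blast
    show "\<And>G. G \<in> ?K \<Longrightarrow> finite G"
      using fin_vertices unfolding clique_free_complex_def by (blast intro: finite_subset)
  qed
  moreover have "int (p * (t - 1)) = int p * (int t - 1)" using assms(3) by (simp add: of_nat_diff)
  ultimately show ?thesis using pure_complex_if_facets_card[OF facet_card] by simp
qed

end
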